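(* Let $\Bbbk$ be a field and let $n,k$ be integers with $1 < k < n$. For each subset $I\subseteq\{0,\ldots,n\}$ of size $k+1$, let $\mathbb{P}^k_I$ be a copy of $\mathbb{P}^k$ with homogeneous coordinates $(x^I_j)_{j\in I}$, and let $U\subset \prod_I \mathbb{P}^k_I$ be the set of points $(P_I)_I$ all of whose coordinates $x^I_j$ are nonzero. Let $V\subseteq U$ be the set of $(P_I)_I\in U$ for which there exists a point $P=(x_0:\cdots:x_n)\in\mathbb{P}^n$ with $P_I = (x_j)_{j\in I}$ (as a point of $\mathbb{P}^k_I$) for every $I$. Let $M_{n,k}$ be the partially specified $\binom{n+1}{k+1}\times(n+1)$ matrix with rows indexed by the subsets $I$ and columns indexed by $j\in\{0,\ldots,n\}$, whose $(I,j)$ entry is $x^I_j$ if $j\in I$ and is unspecified otherwise. Then $V$ is the set of points of $U$ at which all $2\times 2$ minors of $M_{n,k}$ containing no unspecified entries vanish, i.e. the set of $(P_I)_I\in U$ such that \[ x^I_i x^J_j - x^I_j x^J_i = 0 \] for all subsets $I,J$ of size $k+1$ and all $i,j\in I\cap J$.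
   Context: $\mathbb{P}^m$ denotes projective $m$-space over $\Bbbk$, points written in homogeneous coordinates up to a common nonzero scalar. For $I=\{i_0<\cdots<i_k\}$, the projection $\pi_I\colon\mathbb{P}^n\dashrightarrow\mathbb{P}^k$, $(x_0:\cdots:x_n)\mapsto(x_{i_0}:\cdots:x_{i_k})$, is the projection of $\mathbb{P}^n$ onto the coordinate subspace $\langle I\rangle=\{x_j=0 \text{ for } j\notin I\}$; $V$ is the intersection of $U$ with the image of the rational map $\mathbb{P}^n\dashrightarrow\prod_I\mathbb{P}^k_I$ whose components are the $\pi_I$. Geometrically, a point of $U$ is a choice of a point in (the span of) each $k$-dimensional face of the coordinate $n$-simplex, and $V$ is the locus where these are all projections of one point of $\mathbb{P}^n$. *)

theory Defs
  imports Main
begin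

definition faces :: "nat \<Rightarrow> nat \<Rightarrow> nat set set" where
  "faces n k = {I. I \<subseteq> {0..n} \<and> card I = k + 1}"

text \<open>A point (P_I)_I of the product of the P^k_I is given by a family of
  homogeneous coordinate vectors x I :: nat \<Rightarrow> 'a (only the entries x I j with
  j in I matter).\<close>
definition proj_eq :: "nat set \<Rightarrow> (nat \<Rightarrow> 'a::field) \<Rightarrow> (nat \<Rightarrow> 'a) \<Rightarrow> bool" where
  "proj_eq S u v \<longleftrightarrow> (\<exists>c. c \<noteq> 0 \<and> (\<forall>j\<in>S. u j = c * v j))"

text \<open>U: all coordinates x^I_j nonzero (this also makes each x I a valid
  homogeneous coordinate vector, i.e. not identically zero).\<close>
definition U_set :: "nat \<Rightarrow> nat \<Rightarrow> (nat set \<Rightarrow> nat \<Rightarrow> 'a::field) set" where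
  "U_set n k = {x. \<forall>I\<in>faces n k. \<forall>j\<in>I. x I j \<noteq> 0}"

definition V_set :: "nat \<Rightarrow> nat \<Rightarrow> (nat set \<Rightarrow> nat \<Rightarrow> 'a::field) set" where
  "V_set n k = {x \<in> U_set n k. \<exists>p::nat \<Rightarrow> 'a. (\<exists>j\<le>n. p j \<noteq> 0) \<and>
                   (\<forall>I\<in>faces n k. proj_eq I (x I) p)}"

end

theory Submission
  imports Defs
begin

text \<open>The vanishing minors say that each ratio \<open>x\<^sup>I\<^sub>i / x\<^sup>I\<^sub>j\<close> does not depend on the
  face \<open>I \<ni> i, j\<close>.  Since \<open>k \<ge> 2\<close>, any three indices \<open>0, i, j\<close> lie in a common
  face; hence \<open>p\<^sub>j := x\<^sup>I\<^sub>j / x\<^sup>I\<^sub>0\<close> (for any face \<open>I \<ni> 0, j\<close>) is well defined, and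
  every \<open>P\<^sub>I\<close> is the projection of \<open>p\<close>.\<close>

lemma proj_eq_cross_mult:
  assumes "proj_eq S u w" "proj_eq T v w" "i \<in> S \<inter> T" "j \<in> S \<inter> T"
  shows "u i * v j = u j * v i"
proof -
  obtain c d where "\<forall>l\<in>S. u l = c * w l" "\<forall>l\<in>T. v l = d * w l"
    using assms(1,2) unfolding proj_eq_def by blast
  then show ?thesis
    using assms(3,4) by (simp add: algebra_simps)
qed

lemma proj_eqI_cross_mult:
  assumes u_nonzero: "\<And>j. j \<in> S \<Longrightarrow> u j \<noteq> 0"
    and v_nonzero: "\<And>j. j \<in> S \<Longrightarrow> v j \<noteq> 0"
    and minors: "\<And>i j. i \<in> S \<Longrightarrow> j \<in> S \<Longrightarrow> u i * v j = u j * v i"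
  shows "proj_eq S u v"
proof (cases "S = {}")
  case True
  then show ?thesis
    unfolding proj_eq_def by (intro exI[of _ 1]) simp
next
  case False
  then obtain j0 where j0: "j0 \<in> S"
    by blast
  show ?thesis
    unfolding proj_eq_def
  proof (intro exI[of _ "u j0 / v j0"] conjI ballI)
    show "u j0 / v j0 \<noteq> 0"
      using j0 u_nonzero v_nonzero by simp
  next
    fix j assume "j \<in> S"
    then show "u j = u j0 / v j0 * v j"
      using minors[OF \<open>j \<in> S\<close> j0] v_nonzero[OF j0] by (simp add: field_simps)
  qed
qed

lemma ex_common_proj_point:
  fixes x :: "nat set \<Rightarrow> nat \<Rightarrow> 'a::field" and \<F> :: "nat set set" and b :: nat
  assumes nonzero: "\<And>I j. I \<in> \<F> \<Longrightarrow> j \<in> I \<Longrightarrow> x I j \<noteq> 0"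
    and minors: "\<And>I J i j. I \<in> \<F> \<Longrightarrow> J \<in> \<F> \<Longrightarrow> i \<in> I \<inter> J \<Longrightarrow> j \<in> I \<inter> J \<Longrightarrow>
        x I i * x J j = x I j * x J i"
    and triples: "\<And>I j j'. I \<in> \<F> \<Longrightarrow> j \<in> I \<Longrightarrow> j' \<in> I \<Longrightarrow> \<exists>G\<in>\<F>. {b, j, j'} \<subseteq> G"
  shows "\<exists>p. (\<forall>I\<in>\<F>. \<forall>j\<in>I. p j \<noteq> 0) \<and> (\<forall>I\<in>\<F>. proj_eq I (x I) p)"
proof -
  define F where "F j = (SOME G. G \<in> \<F> \<and> b \<in> G \<and> j \<in> G)" for j
  define p where "p j = x (F j) j / x (F j) b" for j
  have p_ratio: "p j = x G j / x G b" if G: "G \<in> \<F>" "b \<in> G" "j \<in> G" for G j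
  proof -
    have F: "F j \<in> \<F> \<and> b \<in> F j \<and> j \<in> F j"
      unfolding F_def by (rule someI[of _ G]) (use G in blast)
    have "x (F j) j * x G b = x (F j) b * x G j"
      using minors[of "F j" G j b] F G by simp
    moreover have "x (F j) b \<noteq> 0" "x G b \<noteq> 0"
      using nonzero F G by blast+
    ultimately show ?thesis
      unfolding p_def by (simp add: field_simps)
  qed
  have p_nonzero: "\<forall>I\<in>\<F>. \<forall>j\<in>I. p j \<noteq> 0"
  proof (intro ballI)
    fix I j assume "I \<in> \<F>" "j \<in> I"
    then obtain G where G: "G \<in> \<F>" "b \<in> G" "j \<in> G"
      using triples[of I j j] by auto
    then show "p j \<noteq> 0"
      using p_ratio[OF G] nonzero[OF G(1)] by simp
  qed
  have "proj_eq I (x I) p" if I: "I \<in> \<F>" for I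
  proof (rule proj_eqI_cross_mult)
    fix j j' assume j: "j \<in> I" "j' \<in> I"
    then obtain G where G: "G \<in> \<F>" "b \<in> G" "j \<in> G" "j' \<in> G"
      using triples[OF I j] by auto
    have "x I j * p j' = x I j * x G j' / x G b"
      using p_ratio[OF G(1,2,4)] by simp
    also have "\<dots> = x I j' * x G j / x G b"
      using minors[of I G j j'] I j G by simp
    also have "\<dots> = x I j' * p j"
      using p_ratio[OF G(1,2,3)] by simp
    finally show "x I j * p j' = x I j' * p j" .
  next
    show "x I j \<noteq> 0" "p j \<noteq> 0" if "j \<in> I" for j
      using that I nonzero p_nonzero by blast+
  qed
  with p_nonzero show ?thesis
    by blast
qed

lemma faces_subset: "I \<in> faces n k \<Longrightarrow> I \<subseteq> {0..n}"
  unfolding faces_def by blast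

lemma faces_extend:
  assumes "A \<subseteq> {0..n}" "card A \<le> k + 1" "k \<le> n"
  shows "\<exists>I\<in>faces n k. A \<subseteq> I"
proof -
  have "finite A"
    using assms(1) finite_subset by blast
  then have "card ({0..n} - A) = n + 1 - card A"
    using assms(1) by (simp add: card_Diff_subset)
  then obtain B where B: "B \<subseteq> {0..n} - A" "card B = k + 1 - card A"
    using assms by (metis obtain_subset_with_card_n add_le_mono1 diff_le_mono)
  have "card (A \<union> B) = card A + card B"
    using B(1) \<open>finite A\<close> by (intro card_Un_disjoint) (auto intro: finite_subset)
  then have "A \<union> B \<in> faces n k"
    using B assms unfolding faces_def by auto
  then show ?thesis
    by blast
qed

lemma faces_cover_triple:
  assumes "2 \<le> k" "k \<le> n" "i \<le> n" "j \<le> n" "l \<le> n"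
  shows "\<exists>G\<in>faces n k. {i, j, l} \<subseteq> G"
proof (rule faces_extend)
  have "card {i, j, l} \<le> 3"
    by (simp add: card_insert_if)
  then show "card {i, j, l} \<le> k + 1"
    using assms(1) by simp
qed (use assms in auto)

definition minor_locus :: "nat \<Rightarrow> nat \<Rightarrow> (nat set \<Rightarrow> nat \<Rightarrow> 'a::field) set" where
  "minor_locus n k = {x \<in> U_set n k. \<forall>I\<in>faces n k. \<forall>J\<in>faces n k. \<forall>i\<in>I \<inter> J. \<forall>j\<in>I \<inter> J.
      x I i * x J j - x I j * x J i = 0}"

lemma V_set_subset_minor_locus: "V_set n k \<subseteq> minor_locus n k"
proof
  fix x assume "x \<in> V_set n k"
  then obtain p where U: "x \<in> U_set n k" and proj: "\<forall>I\<in>faces n k. proj_eq I (x I) p"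
    unfolding V_set_def by blast
  show "x \<in> minor_locus n k"
    unfolding minor_locus_def
  proof (safe intro!: U)
    fix I J i j assume "I \<in> faces n k" "J \<in> faces n k" "i \<in> I" "i \<in> J" "j \<in> I" "j \<in> J"
    then show "x I i * x J j - x I j * x J i = 0"
      using proj_eq_cross_mult[of I "x I" p J "x J"] proj by simp
  qed
qed

lemma minor_locus_subset_V_set:
  assumes "2 \<le> k" "k \<le> n"
  shows "minor_locus n k \<subseteq> V_set n k"
proof
  fix x :: "nat set \<Rightarrow> nat \<Rightarrow> 'a"
  assume "x \<in> minor_locus n k"
  then have U: "x \<in> U_set n k"
    and minors: "\<And>I J i j. I \<in> faces n k \<Longrightarrow> J \<in> faces n k \<Longrightarrow>
        i \<in> I \<inter> J \<Longrightarrow> j \<in> I \<inter> J \<Longrightarrow> x I i * x J j = x I j * x J i"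
    unfolding minor_locus_def by auto
  have nonzero: "x I j \<noteq> 0" if "I \<in> faces n k" "j \<in> I" for I j
    using U that unfolding U_set_def by blast
  have triples: "\<exists>G\<in>faces n k. {0, j, j'} \<subseteq> G" if "I \<in> faces n k" "j \<in> I" "j' \<in> I"
    for I j j'
  proof (rule faces_cover_triple[OF assms])
    show "0 \<le> n" "j \<le> n" "j' \<le> n"
      using faces_subset[OF that(1)] that(2,3) by auto
  qed
  have "\<exists>p. (\<forall>I\<in>faces n k. \<forall>j\<in>I. p j \<noteq> 0) \<and> (\<forall>I\<in>faces n k. proj_eq I (x I) p)"
    by (rule ex_common_proj_point) (fact nonzero minors triples)+
  then obtain p where p_nonzero: "\<forall>I\<in>faces n k. \<forall>j\<in>I. p j \<noteq> 0"
    and proj: "\<forall>I\<in>faces n k. proj_eq I (x I) p"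
    by blast
  obtain G where "G \<in> faces n k" "0 \<in> G"
    using faces_cover_triple[OF assms, of 0 0 0] by auto
  then have "p 0 \<noteq> 0"
    using p_nonzero by blast
  with U proj show "x \<in> V_set n k"
    unfolding V_set_def by blast
qed

theorem mainTheorem2:
  fixes n k :: nat
  assumes "1 < k" and "k < n"
  shows "(V_set n k :: (nat set \<Rightarrow> nat \<Rightarrow> 'a::field) set) =
    {x \<in> U_set n k. \<forall>I\<in>faces n k. \<forall>J\<in>faces n k. \<forall>i\<in>I \<inter> J. \<forall>j\<in>I \<inter> J.
        x I i * x J j - x I j * x J i = 0}"
proof -
  have "V_set n k = (minor_locus n k :: (nat set \<Rightarrow> nat \<Rightarrow> 'a) set)"
  proof (rule subset_antisym)
    show "V_set n k \<subseteq> minor_locus n k"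
      by (rule V_set_subset_minor_locus)
    show "minor_locus n k \<subseteq> V_set n k"
      using assms by (intro minor_locus_subset_V_set) simp_all
  qed
  then show ?thesis
    unfolding minor_locus_def .
qed

end
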